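(* Let $\mathcal{G}=(V,E)$ be an unweighted simple directed graph, let $i\neq j$ be two distinct nodes of $V$, and let $\phi$ be a spanning converging forest chosen uniformly at random from the set $\mathcal{F}$ of all spanning converging forests of $\mathcal{G}$. Define $$\widetilde{\omega}_{ij}(\phi)=\frac{1}{1+d_j}\sum_{k\in N^-_j}\widehat{\omega}_{ik}(\phi).$$ Then $\widetilde{\omega}_{ij}$ is an unbiased estimator of $\omega_{ij}$, i.e. $\mathbb{E}(\widetilde{\omega}_{ij}(\phi))=\omega_{ij}$, its variance is $${\rm Var}(\widetilde{\omega}_{ij})=\frac{\omega_{ij}}{1+d_j}-\omega_{ij}^2,$$ and this variance is always less than or equal to the variance of the estimator $\widehat{\omega}_{ij}(\phi)$.
   Context: $\mathcal{G}=(V,E)$ has $n$ nodes; $a_{ij}=1$ if $(i,j)\in E$ and $0$ otherwise. $d_i=\sum_j a_{ij}$ is the out-degree of $i$, $\mathbf{D}=\mathrm{diag}(d_1,\dots,d_n)$, $\mathbf{L}=\mathbf{D}-\mathbf{A}$ is the Laplacian, and the forest matrix is $\mathbf{\Omega}=(\mathbf{I}+\mathbf{L})^{-1}=(\omega_{ij})$. $N^-_j=\{k:(k,j)\in E\}$ is the set of in-neighbors of $j$. A rooted converging tree is a weakly connected digraph without cycles in which one node (the root) has out-degree $0$ and every other node has out-degree $1$ (an isolated node is such a tree, rooted at itself). A spanning converging forest of $\mathcal{G}$ is a spanning subgraph (containing all of $V$ and a subset of $E$) whose weakly connected components are rooted converging trees. For such a forest $\phi$ and node $i$, $r_\phi(i)$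 denotes the root of the tree of $\phi$ containing $i$. The basic estimator is $\widehat{\omega}_{ij}(\phi)=\mathbb{I}_{\{r_\phi(i)=j\}}$, which equals $1$ if $r_\phi(i)=j$ and $0$ otherwise. *)

theory Defs
  imports "HOL-Analysis.Analysis" "HOL-Probability.Probability"
begin

text \<open>Digraph on the finite vertex type 'n (V = UNIV), edge set E.
  a_ij = 1 iff (i,j) in E.\<close>

definition adj :: "('n::finite \<times> 'n) set \<Rightarrow> 'n \<Rightarrow> 'n \<Rightarrow> real" where
  "adj E i j = (if (i, j) \<in> E then 1 else 0)"

definition outdeg :: "('n::finite \<times> 'n) set \<Rightarrow> 'n \<Rightarrow> real" where
  "outdeg E i = (\<Sum>j\<in>UNIV. adj E i j)"

definition laplacian :: "('n::finite \<times> 'n) set \<Rightarrow> real^'n^'n" where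
  "laplacian E = (\<chi> i j. (if i = j then outdeg E i else 0) - adj E i j)"

definition forest_matrix :: "('n::finite \<times> 'n) set \<Rightarrow> real^'n^'n" where
  "forest_matrix E = matrix_inv (mat 1 + laplacian E)"

definition in_nbrs :: "('n \<times> 'n) set \<Rightarrow> 'n \<Rightarrow> 'n set" where
  "in_nbrs E j = {k. (k, j) \<in> E}"

definition rooted_converging_tree :: "'n set \<Rightarrow> ('n \<times> 'n) set \<Rightarrow> bool" where
  "rooted_converging_tree C T \<longleftrightarrow>
     T \<subseteq> C \<times> C \<and>
     C \<times> C \<subseteq> (T \<union> T\<inverse>)\<^sup>* \<and>
     acyclic T \<and>
     (\<exists>r\<in>C. card {v. (r, v) \<in> T} = 0 \<and> (\<forall>u\<in>C - {r}. card {v. (u, v) \<in> T} = 1))"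

definition weak_components :: "('n \<times> 'n) set \<Rightarrow> 'n set set" where
  "weak_components F = UNIV // ((F \<union> F\<inverse>)\<^sup>*)"

definition spanning_converging_forests :: "('n::finite \<times> 'n) set \<Rightarrow> ('n \<times> 'n) set set" where
  "spanning_converging_forests E =
     {F. F \<subseteq> E \<and> (\<forall>C\<in>weak_components F. rooted_converging_tree C (F \<inter> (C \<times> C)))}"

definition froot :: "('n \<times> 'n) set \<Rightarrow> 'n \<Rightarrow> 'n" where
  "froot F i = (THE r. (i, r) \<in> (F \<union> F\<inverse>)\<^sup>* \<and> card {v. (r, v) \<in> F} = 0)"

definition est_hat :: "'n \<Rightarrow> 'n \<Rightarrow> ('n \<times> 'n) set \<Rightarrow> real" where
  "est_hat i j F = (if froot F i = j then 1 else 0)"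

definition est_tilde :: "('n::finite \<times> 'n) set \<Rightarrow> 'n \<Rightarrow> 'n \<Rightarrow> ('n \<times> 'n) set \<Rightarrow> real" where
  "est_tilde E i j F = (1 / (1 + outdeg E j)) * (\<Sum>k\<in>in_nbrs E j. est_hat i k F)"

end

theory Submission
  imports Defs
begin

(* By the matrix-forest theorem, omega_ab is the fraction of spanning converging forests in
   which the tree of a is rooted at b, i.e. the expectation of the basic estimator.  We prove
   it by showing that these frequencies form a right inverse of I + L: split the forests by
   whether a is a root; a forest in which a has the out-edge (a, m) is a forest in which a is
   a root, plus that edge, with m outside the tree of a, and re-rooting the tree of a at the
   root of m balances row a of (I + L) times the frequency matrix.  Reading
   Omega (I + L) = I at the off-diagonal entry (i, j) gives
   (1 + d_j) omega_ij = sum of omega_ik over the in-neighbours k of j, which is the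
   unbiasedness of the new estimator.  As the root of i is a single node, the new estimator is
   1/(1 + d_j) times an indicator, so its second moment is omega_ij / (1 + d_j); the basic
   estimator is an indicator, with the larger variance omega_ij - omega_ij^2. *)

section \<open>Roots of converging forests\<close>

definition converging_forest :: "('n \<times> 'n) set \<Rightarrow> bool" where
  "converging_forest F \<longleftrightarrow> single_valued F \<and> acyclic F"

lemma rtrancl_from_sink:
  assumes "r \<notin> Domain F" "(r, y) \<in> F\<^sup>*"
  shows "y = r"
  using assms(2,1) by (auto elim: converse_rtranclE)

lemma acyclic_reaches_sink:
  assumes "finite F" "acyclic F"
  shows "\<exists>r. (x, r) \<in> F\<^sup>* \<and> r \<notin> Domain F"
proof (induction x rule: wf_induct[OF finite_acyclic_wf_converse[OF assms]])
  case (1 x)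
  show ?case
  proof (cases "x \<in> Domain F")
    case True
    then obtain y where "(x, y) \<in> F" by blast
    with 1 show ?thesis by (meson converse_iff converse_rtrancl_into_rtrancl)
  qed blast
qed

lemma weak_path_reaches_sink:
  assumes "single_valued F" "(x, y) \<in> (F \<union> F\<inverse>)\<^sup>*" "(x, r) \<in> F\<^sup>*" "r \<notin> Domain F"
  shows "(y, r) \<in> F\<^sup>*"
  using assms(2)
proof (induction rule: rtrancl_induct)
  case (step y z)
  show ?case
  proof (cases "(y, z) \<in> F")
    case True
    then have "y \<noteq> r" using assms(4) by blast
    then obtain w where "(y, w) \<in> F" "(w, r) \<in> F\<^sup>*"
      using step.IH by (auto elim: converse_rtranclE)
    then show ?thesis using True assms(1) by (auto dest: single_valuedD)
  next
    case False
    then show ?thesis using step by (auto intro: converse_rtrancl_into_rtrancl)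
  qed
qed (use assms(3) in simp)

lemma froot_eqI:
  fixes F :: "('n::finite \<times> 'n) set"
  assumes "single_valued F" "(x, r) \<in> F\<^sup>*" "r \<notin> Domain F"
  shows "froot F x = r"
  unfolding froot_def
proof (rule the_equality)
  have "F\<^sup>* \<subseteq> (F \<union> F\<inverse>)\<^sup>*" by (simp add: rtrancl_mono)
  then show "(x, r) \<in> (F \<union> F\<inverse>)\<^sup>* \<and> card {v. (r, v) \<in> F} = 0"
    using assms(2,3) by auto
next
  fix s assume s: "(x, s) \<in> (F \<union> F\<inverse>)\<^sup>* \<and> card {v. (s, v) \<in> F} = 0"
  then have "s \<notin> Domain F" by auto
  moreover have "(s, r) \<in> F\<^sup>*"
    using weak_path_reaches_sink[OF assms(1) conjunct1[OF s] assms(2,3)] .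
  ultimately show "s = r" by (metis rtrancl_from_sink)
qed

lemma froot_reachable:
  fixes F :: "('n::finite \<times> 'n) set"
  assumes "converging_forest F"
  shows "(x, froot F x) \<in> F\<^sup>*" and "froot F x \<notin> Domain F"
proof -
  obtain r where r: "(x, r) \<in> F\<^sup>*" "r \<notin> Domain F"
    using acyclic_reaches_sink[of F] assms by (auto simp: converging_forest_def)
  moreover have "froot F x = r"
    using froot_eqI[OF _ r] assms by (simp add: converging_forest_def)
  ultimately show "(x, froot F x) \<in> F\<^sup>*" "froot F x \<notin> Domain F" by simp_all
qed

lemma froot_sink:
  fixes F :: "('n::finite \<times> 'n) set"
  assumes "single_valued F" "x \<notin> Domain F"
  shows "froot F x = x"
  using froot_eqI[OF assms(1) rtrancl_refl assms(2)] .

lemma froot_weak_path: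
  fixes F :: "('n::finite \<times> 'n) set"
  assumes "converging_forest F" "(x, y) \<in> (F \<union> F\<inverse>)\<^sup>*"
  shows "froot F y = froot F x"
proof -
  have sv: "single_valued F" using assms(1) by (simp add: converging_forest_def)
  have "(y, froot F x) \<in> F\<^sup>*"
    using weak_path_reaches_sink[OF sv assms(2) froot_reachable[OF assms(1)]] .
  then show ?thesis using froot_eqI[OF sv] froot_reachable(2)[OF assms(1)] by blast
qed

section \<open>Weak components\<close>

lemma rtrancl_Int_closed:
  assumes "R `` C \<subseteq> C" "x \<in> C" "(x, y) \<in> R\<^sup>*"
  shows "(x, y) \<in> (Restr R C)\<^sup>*"
proof -
  from assms(3) have "(x, y) \<in> (Restr R C)\<^sup>* \<and> y \<in> C"
  proof (induction rule: rtrancl_induct)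
    case (step y z)
    then have "z \<in> C" using assms(1) by blast
    with step show ?case by (blast intro: rtrancl_into_rtrancl)
  qed (use assms(2) in simp)
  then show ?thesis ..
qed

lemma weak_componentsE:
  assumes "C \<in> weak_components F"
  obtains u where "C = (F \<union> F\<inverse>)\<^sup>* `` {u}"
  using assms unfolding weak_components_def by (auto elim: quotientE)

lemma weak_component_closed:
  assumes "C \<in> weak_components F"
  shows "(F \<union> F\<inverse>) `` C \<subseteq> C"
  using assms by (auto elim!: weak_componentsE intro: rtrancl_into_rtrancl)

lemma weak_component_of:
  "(F \<union> F\<inverse>)\<^sup>* `` {x} \<in> weak_components F" "x \<in> (F \<union> F\<inverse>)\<^sup>* `` {x}"
  unfolding weak_components_def by (auto intro: quotientI)

lemma converging_forest_if_weak_components_trees: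
  fixes F :: "('n::finite \<times> 'n) set"
  assumes trees: "\<And>C. C \<in> weak_components F \<Longrightarrow> rooted_converging_tree C (Restr F C)"
  shows "converging_forest F"
  unfolding converging_forest_def
proof
  show "single_valued F"
  proof (rule single_valuedI)
    fix u v w assume uv: "(u, v) \<in> F" and uw: "(u, w) \<in> F"
    define C where "C = (F \<union> F\<inverse>)\<^sup>* `` {u}"
    have C: "C \<in> weak_components F" "u \<in> C" unfolding C_def by (fact weak_component_of)+
    then have vw: "v \<in> C" "w \<in> C" using weak_component_closed[OF C(1)] uv uw by blast+
    obtain r where r: "card {y. (r, y) \<in> Restr F C} = 0"
      "\<forall>x\<in>C - {r}. card {y. (x, y) \<in> Restr F C} = 1"
      using trees[OF C(1)] unfolding rooted_converging_tree_def by blast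
    have "u \<noteq> r" using r(1) uv vw C(2) by auto
    then obtain b where "{y. (u, y) \<in> Restr F C} = {b}"
      using r(2) C(2) by (auto simp: card_1_singleton_iff)
    moreover have "v \<in> {y. (u, y) \<in> Restr F C}" "w \<in> {y. (u, y) \<in> Restr F C}"
      using uv uw vw C(2) by auto
    ultimately show "v = w" by (metis singletonD)
  qed
  show "acyclic F"
  proof (rule acyclicI, intro allI notI)
    fix x assume "(x, x) \<in> F\<^sup>+"
    then obtain z where xz: "(x, z) \<in> F" and zx: "(z, x) \<in> F\<^sup>*" by (blast dest: tranclD)
    define C where "C = (F \<union> F\<inverse>)\<^sup>* `` {x}"
    have C: "C \<in> weak_components F" "x \<in> C" unfolding C_def by (fact weak_component_of)+
    then have closed: "F `` C \<subseteq> C" using weak_component_closed by blast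
    with xz C(2) have "z \<in> C" by blast
    have "(z, x) \<in> (Restr F C)\<^sup>*" using rtrancl_Int_closed[OF closed \<open>z \<in> C\<close> zx] .
    with xz C(2) \<open>z \<in> C\<close> have "(x, x) \<in> (Restr F C)\<^sup>+"
      by (blast intro: rtrancl_into_trancl2)
    moreover have "acyclic (Restr F C)"
      using trees[OF C(1)] unfolding rooted_converging_tree_def by blast
    ultimately show False by (simp add: acyclic_def)
  qed
qed

lemma weak_component_rooted_converging_tree:
  fixes F :: "('n::finite \<times> 'n) set"
  assumes forest: "converging_forest F" and C: "C \<in> weak_components F"
  shows "rooted_converging_tree C (Restr F C)"
proof -
  let ?W = "(F \<union> F\<inverse>)\<^sup>*"
  obtain u where u: "C = ?W `` {u}" using C by (rule weak_componentsE)
  have closed: "(F \<union> F\<inverse>) `` C \<subseteq> C" using C by (rule weak_component_closed)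
  have "sym ?W" by (simp add: sym_Un_converse sym_rtrancl)
  then have "C \<times> C \<subseteq> ?W" unfolding u by (auto intro: rtrancl_trans dest: symD)
  then have "C \<times> C \<subseteq> ((F \<union> F\<inverse>) \<inter> C \<times> C)\<^sup>*"
    using rtrancl_Int_closed[OF closed] by blast
  moreover have "(F \<union> F\<inverse>) \<inter> C \<times> C = (Restr F C) \<union> (Restr F C)\<inverse>" by blast
  ultimately have connected: "C \<times> C \<subseteq> ((Restr F C) \<union> (Restr F C)\<inverse>)\<^sup>*" by simp
  have "acyclic F" using forest by (simp add: converging_forest_def)
  then have acyclic: "acyclic (Restr F C)" by (rule acyclic_subset) blast
  define r where "r = froot F u"
  have "(u, r) \<in> ?W"
    unfolding r_def using froot_reachable(1)[OF forest] rtrancl_mono[of F "F \<union> F\<inverse>"] by blast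
  then have r: "r \<in> C" "r \<notin> Domain F" unfolding u r_def using froot_reachable(2)[OF forest] by auto
  have "card {y. (x, y) \<in> Restr F C} = 1" if x: "x \<in> C - {r}" for x
  proof -
    have "froot F x = r" unfolding r_def using froot_weak_path[OF forest] x u by blast
    moreover have "single_valued F" using forest by (simp add: converging_forest_def)
    ultimately have "x \<in> Domain F" using froot_sink[of F x] x by (metis DiffD2 singletonI)
    then obtain y where xy: "(x, y) \<in> F" by blast
    then have "{y'. (x, y') \<in> Restr F C} = {y}"
      using x closed forest by (auto simp: converging_forest_def dest: single_valuedD)
    then show ?thesis by simp
  qed
  with r have "\<exists>r\<in>C. card {y. (r, y) \<in> Restr F C} = 0
      \<and> (\<forall>x\<in>C - {r}. card {y. (x, y) \<in> Restr F C} = 1)" by auto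
  with connected acyclic show ?thesis unfolding rooted_converging_tree_def by blast
qed

lemma spanning_converging_forests_eq:
  fixes E :: "('n::finite \<times> 'n) set"
  shows "spanning_converging_forests E = {F. F \<subseteq> E \<and> converging_forest F}"
proof -
  have "(\<forall>C\<in>weak_components F. rooted_converging_tree C (Restr F C)) \<longleftrightarrow> converging_forest F"
    for F :: "('n \<times> 'n) set"
    using converging_forest_if_weak_components_trees weak_component_rooted_converging_tree
    by blast
  then show ?thesis unfolding spanning_converging_forests_def by simp
qed

section \<open>The matrix-forest theorem\<close>

lemma converging_forest_insert_root_edge:
  fixes F :: "('n::finite \<times> 'n) set"
  assumes forest: "converging_forest F" and i: "i \<notin> Domain F" and m: "froot F m \<noteq> i"
  shows "converging_forest (insert (i, m) F)"
    and "froot (insert (i, m) F) x = (if froot F x = i then froot F m else froot F x)"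
proof -
  let ?G = "insert (i, m) F"
  have sv: "single_valued F" and acyclic: "acyclic F"
    using forest by (simp_all add: converging_forest_def)
  have "(m, i) \<notin> F\<^sup>*" using froot_eqI[OF sv _ i] m by blast
  moreover have "single_valued ?G" using sv i by (auto simp: single_valued_def)
  ultimately show forest': "converging_forest ?G" using acyclic by (simp add: converging_forest_def)
  have sv': "single_valued ?G" using forest' by (simp add: converging_forest_def)
  have mono: "F\<^sup>* \<subseteq> ?G\<^sup>*" by (rule rtrancl_mono) blast
  have sink: "froot F y \<notin> Domain ?G" if "froot F y \<noteq> i" for y
    using that froot_reachable(2)[OF forest, of y] by auto
  show "froot ?G x = (if froot F x = i then froot F m else froot F x)"
  proof (cases "froot F x = i")
    case True
    have "(x, i) \<in> ?G\<^sup>*" "(m, froot F m) \<in> ?G\<^sup>*"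
      using froot_reachable(1)[OF forest] True mono by (metis subsetD)+
    then have "(x, froot F m) \<in> ?G\<^sup>*" by (meson insertI1 rtrancl.rtrancl_into_rtrancl rtrancl_trans)
    then show ?thesis using froot_eqI[OF sv'] sink[OF m] True by simp
  next
    case False
    have "(x, froot F x) \<in> ?G\<^sup>*" using froot_reachable(1)[OF forest] mono by blast
    then show ?thesis using froot_eqI[OF sv'] sink[OF False] False by simp
  qed
qed

lemma converging_forest_remove_root_edge:
  fixes F :: "('n::finite \<times> 'n) set"
  assumes forest: "converging_forest F" and im: "(i, m) \<in> F"
  shows "converging_forest (F - {(i, m)})" and "i \<notin> Domain (F - {(i, m)})"
    and "froot (F - {(i, m)}) m \<noteq> i"
proof -
  let ?F = "F - {(i, m)}"
  have sv: "single_valued F" and acyclic: "acyclic F"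
    using forest by (simp_all add: converging_forest_def)
  show forest': "converging_forest ?F"
    using single_valued_subset[OF _ sv] acyclic_subset[OF acyclic]
    by (simp add: converging_forest_def Diff_subset)
  show "i \<notin> Domain ?F" using sv im by (auto dest: single_valuedD)
  show "froot ?F m \<noteq> i"
  proof
    assume "froot ?F m = i"
    then have "(m, i) \<in> F\<^sup>*"
      using froot_reachable(1)[OF forest', of m] rtrancl_mono[of ?F F] by auto
    with im have "(i, i) \<in> F\<^sup>+" by (rule rtrancl_into_trancl2)
    with acyclic show False by (simp add: acyclic_def)
  qed
qed

lemma bij_betw_insert_root_edge:
  fixes E :: "('n::finite \<times> 'n) set"
  shows "bij_betw (\<lambda>(F, m). insert (i, m) F)
    (SIGMA F:{F \<in> spanning_converging_forests E. i \<notin> Domain F}. {m. (i, m) \<in> E \<and> froot F m \<noteq> i})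
    {F \<in> spanning_converging_forests E. i \<in> Domain F}"
  (is "bij_betw ?g (Sigma ?Root ?B) ?Nonroot")
  unfolding bij_betw_def
proof
  show "inj_on ?g (Sigma ?Root ?B)"
  proof (rule inj_onI)
    fix p q assume p: "p \<in> Sigma ?Root ?B" and q: "q \<in> Sigma ?Root ?B" and eq: "?g p = ?g q"
    obtain F m F' m' where pq: "p = (F, m)" "q = (F', m')" by fastforce
    with p q have sinks: "i \<notin> Domain F" "i \<notin> Domain F'" by auto
    from eq pq have eq': "insert (i, m) F = insert (i, m') F'" by simp
    with sinks have "m = m'" by auto
    have "F = insert (i, m) F - {(i, m)}" using sinks by auto
    also have "\<dots> = insert (i, m') F' - {(i, m')}" using eq' \<open>m = m'\<close> by simp
    also have "\<dots> = F'" using sinks by auto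
    finally show "p = q" using pq \<open>m = m'\<close> by simp
  qed
  show "?g ` Sigma ?Root ?B = ?Nonroot"
  proof (intro equalityI subsetI)
    fix G assume "G \<in> ?g ` Sigma ?Root ?B"
    then obtain F m where "G = insert (i, m) F" "F \<in> ?Root" "m \<in> ?B F"
      by (elim imageE SigmaE) auto
    then show "G \<in> ?Nonroot"
      using converging_forest_insert_root_edge(1)[of F i m]
      by (auto simp: spanning_converging_forests_eq)
  next
    fix G assume G: "G \<in> ?Nonroot"
    then obtain m where im: "(i, m) \<in> G" by blast
    have "G \<subseteq> E" "converging_forest G" using G by (auto simp: spanning_converging_forests_eq)
    then have "(G - {(i, m)}, m) \<in> Sigma ?Root ?B"
      using converging_forest_remove_root_edge[of G i m] im
      by (auto simp: spanning_converging_forests_eq)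
    moreover have "G = ?g (G - {(i, m)}, m)" using im by auto
    ultimately show "G \<in> ?g ` Sigma ?Root ?B" by blast
  qed
qed

lemma sum_spanning_converging_forests_by_root_edge:
  fixes E :: "('n::finite \<times> 'n) set" and h :: "('n \<times> 'n) set \<Rightarrow> 'a::comm_monoid_add"
  shows "(\<Sum>F\<in>spanning_converging_forests E. h F)
    = (\<Sum>F\<in>{F \<in> spanning_converging_forests E. i \<notin> Domain F}.
         h F + (\<Sum>m | (i, m) \<in> E \<and> froot F m \<noteq> i. h (insert (i, m) F)))"
proof -
  let ?S = "spanning_converging_forests E"
  let ?Root = "{F \<in> ?S. i \<notin> Domain F}" and ?Nonroot = "{F \<in> ?S. i \<in> Domain F}"
  let ?B = "\<lambda>F. {m. (i, m) \<in> E \<and> froot F m \<noteq> i}"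
  have "(\<Sum>G\<in>?Nonroot. h G) = (\<Sum>(F, m)\<in>Sigma ?Root ?B. h (insert (i, m) F))"
    using sum.reindex_bij_betw[OF bij_betw_insert_root_edge, of h] by (simp add: case_prod_unfold)
  also have "\<dots> = (\<Sum>F\<in>?Root. \<Sum>m\<in>?B F. h (insert (i, m) F))"
    by (rule sum.Sigma[symmetric]) auto
  finally have "(\<Sum>G\<in>?Nonroot. h G) = \<dots>" .
  moreover have "(\<Sum>F\<in>?Root \<union> ?Nonroot. h F) = (\<Sum>F\<in>?Root. h F) + (\<Sum>G\<in>?Nonroot. h G)"
    by (rule sum.union_disjoint) auto
  moreover have "?Root \<union> ?Nonroot = ?S" by blast
  ultimately show ?thesis by (simp add: sum.distrib)
qed

lemma outdeg_eq_card: "outdeg E a = real (card {k. (a, k) \<in> E})"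
  by (simp add: outdeg_def adj_def of_bool_def[symmetric] Int_def)

(* With r the root map of a forest in which i is a root, and K the out-neighbours of i, the
   left-hand side sums the (i, j) entry of (I + L) R over that forest and its extensions by one
   edge (i, m), where R is the root indicator matrix. *)
lemma redirected_roots_balance:
  fixes r :: "'a \<Rightarrow> 'a" and g :: "('a \<Rightarrow> 'a) \<Rightarrow> real"
  assumes "finite K" "r i = i"
    and g: "\<And>\<rho>. g \<rho> = (1 + real (card K)) * of_bool (\<rho> i = j) - (\<Sum>k\<in>K. of_bool (\<rho> k = j))"
  shows "g r + (\<Sum>m\<in>{m \<in> K. r m \<noteq> i}. g (\<lambda>x. if r x = i then r m else r x))
    = of_bool (i = j) * (1 + real (card {m \<in> K. r m \<noteq> i}))"
proof -
  let ?A = "{k \<in> K. r k = i}" and ?B = "{k \<in> K. r k \<noteq> i}"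
  define a where "a = (\<Sum>m\<in>?B. of_bool (r m = j) :: real)"
  have K: "?A \<union> ?B = K" "?A \<inter> ?B = {}" by auto
  have split: "(\<Sum>k\<in>K. \<phi> k) = (\<Sum>k\<in>?A. \<phi> k) + (\<Sum>k\<in>?B. \<phi> k)" for \<phi> :: "'a \<Rightarrow> real"
    using sum.union_disjoint[OF _ _ K(2), of \<phi>] assms(1) unfolding K(1) by simp
  have card: "real (card K) = real (card ?A) + real (card ?B)"
    using split[of "\<lambda>_. 1"] by simp
  have g_eq: "g \<rho> = (1 + real (card ?B)) * of_bool (\<rho> i = j) - a"
    if A: "\<forall>k\<in>?A. \<rho> k = \<rho> i" and B: "\<forall>k\<in>?B. \<rho> k = r k" for \<rho>
  proof -
    have "(\<Sum>k\<in>?A. of_bool (\<rho> k = j)) = (\<Sum>k\<in>?A. of_bool (\<rho> i = j) :: real)"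
      using A by (intro sum.cong) auto
    moreover have "(\<Sum>k\<in>?B. of_bool (\<rho> k = j)) = a"
      unfolding a_def using B by (intro sum.cong) auto
    ultimately have "(\<Sum>k\<in>K. of_bool (\<rho> k = j)) = real (card ?A) * of_bool (\<rho> i = j) + a"
      using split[of "\<lambda>k. of_bool (\<rho> k = j)"] by (simp del: sum_of_bool_eq)
    then show ?thesis using card by (simp add: g algebra_simps del: sum_of_bool_eq)
  qed
  have "g r = (1 + real (card ?B)) * of_bool (i = j) - a"
    using g_eq[of r] assms(2) by simp
  moreover have "(\<Sum>m\<in>?B. g (\<lambda>x. if r x = i then r m else r x)) = a"
  proof -
    have "(\<Sum>m\<in>?B. g (\<lambda>x. if r x = i then r m else r x))
        = (\<Sum>m\<in>?B. (1 + real (card ?B)) * of_bool (r m = j) - a)"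
      using g_eq assms(2) by (intro sum.cong) auto
    also have "\<dots> = (1 + real (card ?B)) * a - real (card ?B) * a"
      by (simp add: sum_subtractf a_def flip: sum_distrib_left del: sum_of_bool_eq)
    also have "\<dots> = a" by (simp add: algebra_simps)
    finally show ?thesis .
  qed
  ultimately show ?thesis by (simp add: algebra_simps)
qed

lemma root_count_row_identity:
  fixes E :: "('n::finite \<times> 'n) set"
  shows "(1 + outdeg E a) * (\<Sum>F\<in>spanning_converging_forests E. est_hat a b F)
      - (\<Sum>k | (a, k) \<in> E. \<Sum>F\<in>spanning_converging_forests E. est_hat k b F)
    = of_bool (a = b) * real (card (spanning_converging_forests E))"
proof -
  let ?S = "spanning_converging_forests E" and ?K = "{k. (a, k) \<in> E}"
  let ?Root = "{F \<in> ?S. a \<notin> Domain F}" and ?B = "\<lambda>F. {m. (a, m) \<in> E \<and> froot F m \<noteq> a}"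
  define g where "g \<rho> = (1 + real (card ?K)) * of_bool (\<rho> a = b) - (\<Sum>k\<in>?K. of_bool (\<rho> k = b))"
    for \<rho> :: "'n \<Rightarrow> 'n"
  have forest: "converging_forest F" if "F \<in> ?S" for F
    using that by (simp add: spanning_converging_forests_eq)
  have "(1 + outdeg E a) * (\<Sum>F\<in>?S. est_hat a b F) - (\<Sum>k\<in>?K. \<Sum>F\<in>?S. est_hat k b F)
      = (\<Sum>F\<in>?S. g (froot F))"
    by (simp add: g_def outdeg_eq_card est_hat_def sum_subtractf sum_distrib_left
        sum.swap[of _ ?K] of_bool_def del: sum_of_bool_eq)
  also have "\<dots> = (\<Sum>F\<in>?Root. g (froot F) + (\<Sum>m\<in>?B F. g (froot (insert (a, m) F))))"
    by (rule sum_spanning_converging_forests_by_root_edge)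
  also have "\<dots> = (\<Sum>F\<in>?Root. of_bool (a = b) * (1 + real (card (?B F))))"
  proof (rule sum.cong)
    fix F assume F: "F \<in> ?Root"
    then have "froot F a = a" using forest froot_sink by (auto simp: converging_forest_def)
    moreover have "froot (insert (a, m) F) = (\<lambda>x. if froot F x = a then froot F m else froot F x)"
      if "m \<in> ?B F" for m
      using converging_forest_insert_root_edge(2)[of F a m] F forest that by auto
    ultimately show "g (froot F) + (\<Sum>m\<in>?B F. g (froot (insert (a, m) F)))
        = of_bool (a = b) * (1 + real (card (?B F)))"
      using redirected_roots_balance[of ?K "froot F" a g b] g_def by simp
  qed simp
  also have "\<dots> = of_bool (a = b) * real (card ?S)"
    using sum_spanning_converging_forests_by_root_edge[of "\<lambda>_. 1::real" E a]
    by (simp add: sum_distrib_left)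
  finally show ?thesis by simp
qed

lemma mat_1_plus_laplacian_nth:
  "(mat 1 + laplacian E) $ a $ k = of_bool (a = k) * (1 + outdeg E a) - adj E a k"
  by (simp add: mat_def laplacian_def)

lemma mat_1_plus_laplacian_mult_nth:
  fixes E :: "('n::finite \<times> 'n) set" and X :: "real^'m^'n"
  shows "((mat 1 + laplacian E) ** X) $ a $ b
    = (1 + outdeg E a) * X $ a $ b - (\<Sum>k | (a, k) \<in> E. X $ k $ b)"
proof -
  have "((mat 1 + laplacian E) ** X) $ a $ b
      = (\<Sum>k\<in>UNIV. of_bool (a = k) * ((1 + outdeg E a) * X $ k $ b))
        - (\<Sum>k\<in>UNIV. adj E a k * X $ k $ b)"
    unfolding matrix_matrix_mult_def vec_lambda_beta mat_1_plus_laplacian_nth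
    by (simp add: left_diff_distrib sum_subtractf mult.assoc del: sum_of_bool_mult_eq)
  then show ?thesis by (simp add: adj_def of_bool_def[symmetric] Int_def)
qed

lemma mult_mat_1_plus_laplacian_nth:
  fixes E :: "('n::finite \<times> 'n) set" and X :: "real^'n^'m"
  shows "(X ** (mat 1 + laplacian E)) $ a $ b
    = X $ a $ b * (1 + outdeg E b) - (\<Sum>k\<in>in_nbrs E b. X $ a $ k)"
proof -
  have "(X ** (mat 1 + laplacian E)) $ a $ b
      = (\<Sum>k\<in>UNIV. of_bool (k = b) * (X $ a $ k * (1 + outdeg E k)))
        - (\<Sum>k\<in>UNIV. X $ a $ k * adj E k b)"
    unfolding matrix_matrix_mult_def vec_lambda_beta mat_1_plus_laplacian_nth
    by (simp add: right_diff_distrib sum_subtractf mult_ac del: sum_of_bool_mult_eq sum_mult_of_bool_eq)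
  then show ?thesis by (simp add: adj_def in_nbrs_def of_bool_def[symmetric] Int_def)
qed

lemma matrix_inv_eqI:
  fixes A B :: "'a::field^'n^'n"
  assumes "A ** B = mat 1"
  shows "matrix_inv A = B"
proof -
  have "B ** A = mat 1" using assms by (simp add: matrix_left_right_inverse)
  with assms have "A ** B = mat 1 \<and> B ** A = mat 1" ..
  then have "A ** matrix_inv A = mat 1 \<and> matrix_inv A ** A = mat 1"
    unfolding matrix_inv_def by (rule someI)
  then have "matrix_inv A ** (A ** B) = B" by (simp add: matrix_mul_assoc del: assms)
  with assms show ?thesis by simp
qed

definition root_frequency_matrix :: "('n::finite \<times> 'n) set \<Rightarrow> real^'n^'n" where
  "root_frequency_matrix E = (\<chi> a b. (\<Sum>F\<in>spanning_converging_forests E. est_hat a b F)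
    / real (card (spanning_converging_forests E)))"

lemma empty_in_spanning_converging_forests: "{} \<in> spanning_converging_forests E"
  by (simp add: spanning_converging_forests_eq converging_forest_def acyclic_def)

lemma mat_1_plus_laplacian_mult_root_frequency_matrix:
  fixes E :: "('n::finite \<times> 'n) set"
  shows "(mat 1 + laplacian E) ** root_frequency_matrix E = mat 1"
proof -
  let ?S = "spanning_converging_forests E"
  have "card ?S \<noteq> 0"
    using empty_in_spanning_converging_forests[of E] by (auto simp: card_eq_0_iff)
  moreover have mat_1_nth: "(mat 1 :: real^'n^'n) $ a $ b = of_bool (a = b)" for a b
    by (simp add: mat_def)
  ultimately have "((mat 1 + laplacian E) ** root_frequency_matrix E) $ a $ b = mat 1 $ a $ b" for a b
    using root_count_row_identity[of E a b]
    by (simp add: root_frequency_matrix_def mat_1_plus_laplacian_mult_nth mat_1_nth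
        sum_divide_distrib[symmetric] diff_divide_distrib[symmetric])
  then show ?thesis by (simp add: vec_eq_iff)
qed

theorem forest_matrix_eq_root_frequency_matrix:
  fixes E :: "('n::finite \<times> 'n) set"
  shows "forest_matrix E = root_frequency_matrix E"
  unfolding forest_matrix_def
  using mat_1_plus_laplacian_mult_root_frequency_matrix by (rule matrix_inv_eqI)

lemma forest_matrix_in_nbrs_recurrence:
  fixes E :: "('n::finite \<times> 'n) set"
  assumes "a \<noteq> b"
  shows "(1 + outdeg E b) * forest_matrix E $ a $ b = (\<Sum>k\<in>in_nbrs E b. forest_matrix E $ a $ k)"
proof -
  have "forest_matrix E ** (mat 1 + laplacian E) = mat 1"
    using mat_1_plus_laplacian_mult_root_frequency_matrix[of E]
    by (simp add: forest_matrix_eq_root_frequency_matrix matrix_left_right_inverse)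
  then have "(forest_matrix E ** (mat 1 + laplacian E)) $ a $ b = 0"
    using assms by (simp add: mat_def)
  then show ?thesis unfolding mult_mat_1_plus_laplacian_nth by (simp add: mult.commute)
qed

section \<open>The two estimators\<close>

lemma expectation_est_hat:
  fixes E :: "('n::finite \<times> 'n) set"
  shows "measure_pmf.expectation (pmf_of_set (spanning_converging_forests E)) (est_hat a b)
    = forest_matrix E $ a $ b"
proof -
  have "spanning_converging_forests E \<noteq> {}" using empty_in_spanning_converging_forests by blast
  then show ?thesis
    by (simp add: integral_pmf_of_set forest_matrix_eq_root_frequency_matrix root_frequency_matrix_def)
qed

lemma est_tilde_eq_indicator:
  fixes E :: "('n::finite \<times> 'n) set"
  shows "est_tilde E i j F = of_bool (froot F i \<in> in_nbrs E j) / (1 + outdeg E j)"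
  by (simp add: est_tilde_def est_hat_def)

lemma expectation_est_tilde:
  fixes E :: "('n::finite \<times> 'n) set"
  assumes "i \<noteq> j"
  shows "measure_pmf.expectation (pmf_of_set (spanning_converging_forests E)) (est_tilde E i j)
    = forest_matrix E $ i $ j"
proof -
  let ?p = "pmf_of_set (spanning_converging_forests E)"
  have "finite (set_pmf ?p)" using empty_in_spanning_converging_forests[of E] by auto
  then have "measure_pmf.expectation ?p (est_tilde E i j)
      = (\<Sum>k\<in>in_nbrs E j. measure_pmf.expectation ?p (est_hat i k)) / (1 + outdeg E j)"
    unfolding est_tilde_def by (simp add: integrable_measure_pmf_finite)
  also have "\<dots> = forest_matrix E $ i $ j"
    using forest_matrix_in_nbrs_recurrence[OF assms, of E]
    by (simp add: expectation_est_hat outdeg_eq_card field_simps)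
  finally show ?thesis .
qed

lemma measure_pmf_variance_of_scaled_indicator:
  fixes f :: "'a \<Rightarrow> real"
  assumes "finite (set_pmf p)" "\<And>x. (f x)\<^sup>2 = c * f x"
  shows "measure_pmf.variance p f = c * measure_pmf.expectation p f - (measure_pmf.expectation p f)\<^sup>2"
proof -
  have integrable: "integrable (measure_pmf p) g" for g :: "'a \<Rightarrow> real"
    using assms(1) by (rule integrable_measure_pmf_finite)
  have "measure_pmf.variance p f
      = measure_pmf.expectation p (\<lambda>x. (f x)\<^sup>2) - (measure_pmf.expectation p f)\<^sup>2"
    by (rule measure_pmf.variance_eq) (fact integrable)+
  then show ?thesis by (simp add: assms(2))
qed

theorem lemma4p1:
  fixes E :: "('n::finite \<times> 'n) set" and i j :: 'n
  assumes no_loops: "\<forall>v. (v, v) \<notin> E"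
    and ij: "i \<noteq> j"
  shows "measure_pmf.expectation (pmf_of_set (spanning_converging_forests E)) (est_tilde E i j)
           = forest_matrix E $ i $ j
       \<and> measure_pmf.variance (pmf_of_set (spanning_converging_forests E)) (est_tilde E i j)
           = forest_matrix E $ i $ j / (1 + outdeg E j) - (forest_matrix E $ i $ j)\<^sup>2
       \<and> measure_pmf.variance (pmf_of_set (spanning_converging_forests E)) (est_tilde E i j)
           \<le> measure_pmf.variance (pmf_of_set (spanning_converging_forests E)) (est_hat i j)"
proof -
  let ?p = "pmf_of_set (spanning_converging_forests E)"
  let ?\<omega> = "forest_matrix E $ i $ j" and ?d = "outdeg E j"
  have finite: "finite (set_pmf ?p)" using empty_in_spanning_converging_forests[of E] by auto
  have "?d \<ge> 0" by (simp add: outdeg_eq_card)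
  have "?\<omega> \<ge> 0"
    unfolding expectation_est_hat[symmetric] by (rule integral_nonneg_AE) (simp add: est_hat_def)
  have tilde: "measure_pmf.variance ?p (est_tilde E i j) = 1 / (1 + ?d) * ?\<omega> - ?\<omega>\<^sup>2"
    using measure_pmf_variance_of_scaled_indicator[OF finite, of "est_tilde E i j" "1 / (1 + ?d)"]
    by (simp add: est_tilde_eq_indicator expectation_est_tilde[OF ij] power2_eq_square)
  have hat: "measure_pmf.variance ?p (est_hat i j) = 1 * ?\<omega> - ?\<omega>\<^sup>2"
    using measure_pmf_variance_of_scaled_indicator[OF finite, of "est_hat i j" 1]
    by (simp add: est_hat_def expectation_est_hat power2_eq_square)
  have "?\<omega> / (1 + ?d) \<le> ?\<omega>"
    using \<open>?d \<ge> 0\<close> \<open>?\<omega> \<ge> 0\<close> by (simp add: divide_le_eq mult_le_cancel_left1)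
  then show ?thesis using tilde hat expectation_est_tilde[OF ij] by simp
qed

end
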